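(* Let $S$ be an MLD-set of a graph $G$, and let $u\in S$ and $x\in V(G)\setminus S$ be such that the pair $\{u,x\}$ is not doubly resolved by $S$. Then $N(x)\cap S=\{u\}$, and $x$ is the only vertex $x'\in V(G)\setminus S$ such that $\{u,x'\}$ is not doubly resolved by $S$.
   Context: All graphs are finite, simple, undirected and connected; $d(u,v)$ is the shortest-path distance and $N(x)$ the open neighborhood of $x$. A set $S\subseteq V(G)$ is resolving if for all distinct $x,y\in V(G)$ there is $u\in S$ with $d(u,x)\ne d(u,y)$; dominating if every vertex not in $S$ has a neighbor in $S$. An MLD-set is a set both resolving and dominating. Two vertices $u,v$ doubly resolve a pair $\{x,y\}$ if $d(u,x)-d(u,y)\ne d(v,x)-d(v,y)$; a set $S$ doubly resolves $\{x,y\}$ if some two vertices of $S$ doubly resolve it. *)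

theory Defs
  imports Main
begin

definition simple_graph :: "'a set \<Rightarrow> ('a \<Rightarrow> 'a \<Rightarrow> bool) \<Rightarrow> bool" where
  "simple_graph V E \<longleftrightarrow> finite V \<and> V \<noteq> {} \<and>
     (\<forall>x y. E x y \<longrightarrow> x \<in> V \<and> y \<in> V) \<and>
     (\<forall>x y. E x y \<longrightarrow> E y x) \<and> (\<forall>x. \<not> E x x)"

definition is_walk :: "('a \<Rightarrow> 'a \<Rightarrow> bool) \<Rightarrow> 'a list \<Rightarrow> bool" where
  "is_walk E p \<longleftrightarrow> p \<noteq> [] \<and> (\<forall>i. Suc i < length p \<longrightarrow> E (p ! i) (p ! Suc i))"

definition walk_betw :: "('a \<Rightarrow> 'a \<Rightarrow> bool) \<Rightarrow> 'a \<Rightarrow> nat \<Rightarrow> 'a \<Rightarrow> bool" where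
  "walk_betw E x n y \<longleftrightarrow> (\<exists>p. is_walk E p \<and> hd p = x \<and> last p = y \<and> length p = Suc n)"

definition connected_graph :: "'a set \<Rightarrow> ('a \<Rightarrow> 'a \<Rightarrow> bool) \<Rightarrow> bool" where
  "connected_graph V E \<longleftrightarrow> simple_graph V E \<and> (\<forall>x\<in>V. \<forall>y\<in>V. \<exists>n. walk_betw E x n y)"

definition gdist :: "('a \<Rightarrow> 'a \<Rightarrow> bool) \<Rightarrow> 'a \<Rightarrow> 'a \<Rightarrow> nat" where
  "gdist E x y = (LEAST n. walk_betw E x n y)"

definition nbhd :: "('a \<Rightarrow> 'a \<Rightarrow> bool) \<Rightarrow> 'a \<Rightarrow> 'a set" where
  "nbhd E x = {y. E x y}"

definition resolving :: "'a set \<Rightarrow> ('a \<Rightarrow> 'a \<Rightarrow> bool) \<Rightarrow> 'a set \<Rightarrow> bool" where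
  "resolving V E S \<longleftrightarrow> S \<subseteq> V \<and>
     (\<forall>x\<in>V. \<forall>y\<in>V. x \<noteq> y \<longrightarrow> (\<exists>u\<in>S. gdist E u x \<noteq> gdist E u y))"

definition dominating :: "'a set \<Rightarrow> ('a \<Rightarrow> 'a \<Rightarrow> bool) \<Rightarrow> 'a set \<Rightarrow> bool" where
  "dominating V E S \<longleftrightarrow> S \<subseteq> V \<and> (\<forall>x\<in>V - S. \<exists>s\<in>S. E x s)"

definition MLD_set :: "'a set \<Rightarrow> ('a \<Rightarrow> 'a \<Rightarrow> bool) \<Rightarrow> 'a set \<Rightarrow> bool" where
  "MLD_set V E S \<longleftrightarrow> resolving V E S \<and> dominating V E S"

definition doubly_resolve :: "('a \<Rightarrow> 'a \<Rightarrow> bool) \<Rightarrow> 'a \<Rightarrow> 'a \<Rightarrow> 'a \<Rightarrow> 'a \<Rightarrow> bool" where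
  "doubly_resolve E u v x y \<longleftrightarrow>
     int (gdist E u x) - int (gdist E u y) \<noteq> int (gdist E v x) - int (gdist E v y)"

definition set_doubly_resolves :: "('a \<Rightarrow> 'a \<Rightarrow> bool) \<Rightarrow> 'a set \<Rightarrow> 'a \<Rightarrow> 'a \<Rightarrow> bool" where
  "set_doubly_resolves E S x y \<longleftrightarrow> (\<exists>u\<in>S. \<exists>v\<in>S. doubly_resolve E u v x y)"

end

theory Submission
  imports Defs
begin

text \<open>If \<open>S\<close> does not doubly resolve \<open>{u, y}\<close> with \<open>u \<in> S\<close>, comparing any \<open>v \<in> S\<close> with \<open>u\<close>
  itself gives \<open>d(v, y) = d(v, u) + d(u, y)\<close>: every vertex of \<open>S\<close> sees \<open>y\<close> through \<open>u\<close>.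
  For \<open>y \<notin> S\<close> a dominating neighbour \<open>s \<in> S\<close> of \<open>y\<close> then has \<open>1 = d(s, u) + d(u, y)\<close>,
  which forces \<open>s = u\<close> and \<open>d(u, y) = 1\<close>. Hence any two such vertices \<open>y\<close> have the same
  distance \<open>d(v, u) + 1\<close> to every \<open>v \<in> S\<close>, and since \<open>S\<close> is resolving they coincide.\<close>

lemma walk_betw_0_iff: "walk_betw E a 0 b \<longleftrightarrow> a = b"
proof
  assume "walk_betw E a 0 b"
  then obtain p where "hd p = a" "last p = b" "length p = 1"
    unfolding walk_betw_def by auto
  then show "a = b" by (cases p) auto
next
  assume "a = b"
  then show "walk_betw E a 0 b"
    unfolding walk_betw_def is_walk_def by (intro exI[of _ "[a]"]) auto
qed

lemma walk_betw_edge: "E a b \<Longrightarrow> walk_betw E a 1 b"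
  unfolding walk_betw_def is_walk_def
  by (intro exI[of _ "[a, b]"]) (auto simp: less_Suc_eq)

lemma gdist_self [simp]: "gdist E a a = 0"
  unfolding gdist_def by (simp add: walk_betw_0_iff)

lemma gdist_eq_0_iff:
  assumes "walk_betw E a n b"
  shows "gdist E a b = 0 \<longleftrightarrow> a = b"
proof
  assume "gdist E a b = 0"
  then have "walk_betw E a 0 b"
    using LeastI[of "\<lambda>n. walk_betw E a n b", OF assms] unfolding gdist_def by simp
  then show "a = b" by (simp add: walk_betw_0_iff)
qed simp

lemma gdist_adjacent:
  assumes "E a b" and "a \<noteq> b"
  shows "gdist E a b = 1"
proof -
  have "gdist E a b \<le> 1"
    unfolding gdist_def using walk_betw_edge[of E a b, OF assms(1)] by (rule Least_le)
  moreover have "gdist E a b \<noteq> 0"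
    using gdist_eq_0_iff[OF walk_betw_edge[of E a b, OF assms(1)]] assms(2) by simp
  ultimately show ?thesis by simp
qed

lemma connected_gdist_eq_0_iff:
  assumes "connected_graph V E" and "a \<in> V" and "b \<in> V"
  shows "gdist E a b = 0 \<longleftrightarrow> a = b"
proof -
  obtain n where "walk_betw E a n b"
    using assms unfolding connected_graph_def by blast
  then show ?thesis by (rule gdist_eq_0_iff)
qed

lemma not_set_doubly_resolves_gdist:
  assumes "\<not> set_doubly_resolves E S u y" and "u \<in> S" and "v \<in> S"
  shows "gdist E v y = gdist E v u + gdist E u y"
proof -
  have "\<not> doubly_resolve E v u u y"
    using assms unfolding set_doubly_resolves_def by blast
  then show ?thesis unfolding doubly_resolve_def by simp
qed

lemma not_set_doubly_resolves_neighbour: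
  assumes G: "connected_graph V E" and "S \<subseteq> V" and u: "u \<in> S"
    and y: "y \<in> V - S" and not_dr: "\<not> set_doubly_resolves E S u y"
    and s: "s \<in> S" and "E y s"
  shows "s = u \<and> gdist E u y = 1"
proof -
  have "E s y" and "s \<noteq> y"
    using G \<open>E y s\<close> s y unfolding connected_graph_def simple_graph_def by auto
  then have "gdist E s y = 1" by (rule gdist_adjacent)
  moreover have "gdist E u y \<noteq> 0"
    using connected_gdist_eq_0_iff[OF G] u y \<open>S \<subseteq> V\<close> by auto
  ultimately have "gdist E s u = 0" "gdist E u y = 1"
    using not_set_doubly_resolves_gdist[OF not_dr u s] by linarith+
  then show ?thesis
    using connected_gdist_eq_0_iff[OF G] u s \<open>S \<subseteq> V\<close> by blast
qed

lemma MLD_set_not_set_doubly_resolves_gdist: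
  assumes G: "connected_graph V E" and S: "MLD_set V E S" and u: "u \<in> S"
    and y: "y \<in> V - S" and not_dr: "\<not> set_doubly_resolves E S u y" and v: "v \<in> S"
  shows "gdist E v y = gdist E v u + 1"
proof -
  have "S \<subseteq> V" and "\<exists>s\<in>S. E y s"
    using S y unfolding MLD_set_def dominating_def by auto
  then have "gdist E u y = 1"
    using not_set_doubly_resolves_neighbour[OF G _ u y not_dr] by blast
  with not_set_doubly_resolves_gdist[OF not_dr u v] show ?thesis by simp
qed

theorem lemma8:
  fixes V :: "'a set" and E :: "'a \<Rightarrow> 'a \<Rightarrow> bool" and S :: "'a set" and u x :: 'a
  assumes "connected_graph V E"
    and "MLD_set V E S"
    and "u \<in> S" and "x \<in> V - S"
    and "\<not> set_doubly_resolves E S u x"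
  shows "nbhd E x \<inter> S = {u} \<and>
         (\<forall>x'\<in>V - S. \<not> set_doubly_resolves E S u x' \<longrightarrow> x' = x)"
proof
  have "S \<subseteq> V" and "\<exists>s\<in>S. E x s"
    using assms(2,4) unfolding MLD_set_def dominating_def by auto
  then show "nbhd E x \<inter> S = {u}"
    using not_set_doubly_resolves_neighbour[OF assms(1) _ assms(3-5)]
    unfolding nbhd_def by blast
next
  show "\<forall>x'\<in>V - S. \<not> set_doubly_resolves E S u x' \<longrightarrow> x' = x"
  proof (intro ballI impI)
    fix x' assume x': "x' \<in> V - S" "\<not> set_doubly_resolves E S u x'"
    have "\<forall>v\<in>S. gdist E v x' = gdist E v x"
      using MLD_set_not_set_doubly_resolves_gdist[OF assms(1,2,3)] x' assms(4,5) by simp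
    then show "x' = x"
      using assms(2,4) x'(1) unfolding MLD_set_def resolving_def by blast
  qed
qed

end
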